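(* Let $h>0$ and $\mathbb{T}:=\{0,h,2h,3h,\ldots\}$. Let $p_0,p_1\in\mathbb{C}\setminus\{-\tfrac{1}{h}\}$ with $p_0\ne p_1$, and define $p:\mathbb{T}\to\mathbb{C}$ by $p(t)=p_0$ if $\tfrac{t}{h}\equiv 0 \pmod 2$ and $p(t)=p_1$ if $\tfrac{t}{h}\equiv 1\pmod 2$. Consider the equation $$\Delta_h x(t)-p(t)x(t)=0,\qquad t\in\mathbb{T},\qquad (\ast)$$ where $\Delta_h x(t):=\frac{x(t+h)-x(t)}{h}$. Assume $0<|1+hp_0||1+hp_1|\ne 1$. Let $\varepsilon>0$ be fixed and let $\phi:\mathbb{T}\to\mathbb{C}$ satisfy $|\Delta_h\phi(t)-p(t)\phi(t)|\le\varepsilon$ for all $t\in\mathbb{T}$. Let $e_p(t):=\prod_{j=0}^{t/h-1}(1+hp(jh))$ for $t\in\mathbb{T}$ (empty product $=1$, so $e_p(0)=1$). Then: (i) If $|1+hp_0||1+hp_1|>1$, then $\lim_{t\to\infty}\frac{\phi(t)}{e_p(t)}$ exists, and the function $x(t):=\left(\lim_{s\to\infty}\frac{\phi(s)}{e_p(s)}\right)e_p(t)$ is the unique solution of $(\ast)$ with $|\phi(t)-x(t)|\le K_1\varepsilon$ for all $t\in\mathbb{T}$, where $$K_1:=h\max\left\{\frac{1+|1+hp_0|}{-1+|1+hp_0||1+hp_1|},\ \frac{1+|1+hp_1|}{-1+|1+hp_0||1+hp_1|}\right\};$$ moreover $K_1$ is the minimum Ulam stability constant for $(\ast)$. (ii)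 If $0<|1+hp_0||1+hp_1|<1$, then any solution $x$ of $(\ast)$ with $|\phi(0)-x(0)|<\varepsilon h\,\frac{1+|1+hp_1|}{1-|1+hp_0||1+hp_1|}$ satisfies $$|\phi(t)-x(t)|<\varepsilon h\max\left\{\frac{1+|1+hp_0|}{1-|1+hp_0||1+hp_1|},\ \frac{1+|1+hp_1|}{1-|1+hp_0||1+hp_1|}\right\}$$ for all $t\in\mathbb{T}$.
   Context: A constant $K>0$ is an Ulam stability constant for $(\ast)$ on $\mathbb{T}$ if for every $\varepsilon>0$ and every $\phi:\mathbb{T}\to\mathbb{C}$ with $|\Delta_h\phi(t)-p(t)\phi(t)|\le\varepsilon$ for all $t\in\mathbb{T}$, there exists a solution $x:\mathbb{T}\to\mathbb{C}$ of $(\ast)$ with $|\phi(t)-x(t)|\le K\varepsilon$ for all $t\in\mathbb{T}$. The equation has Ulam stability if such a $K$ exists. "Minimum Ulam stability constant" means $K_1$ is an Ulam stability constant and no positive number smaller than $K_1$ is one. *)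

theory Defs
  imports "HOL-Analysis.Analysis"
begin

text \<open>The time scale T = {0, h, 2h, ...} is parametrised by n :: nat, i.e. a function
  x : T -> C is represented as x :: nat => complex with x n standing for x(n h).\<close>

definition delta_h :: "real \<Rightarrow> (nat \<Rightarrow> complex) \<Rightarrow> nat \<Rightarrow> complex" where
  "delta_h h x n = (x (Suc n) - x n) / complex_of_real h"

definition pfun :: "complex \<Rightarrow> complex \<Rightarrow> nat \<Rightarrow> complex" where
  "pfun p0 p1 n = (if even n then p0 else p1)"

definition e_p :: "real \<Rightarrow> (nat \<Rightarrow> complex) \<Rightarrow> nat \<Rightarrow> complex" where
  "e_p h p n = (\<Prod>j<n. 1 + complex_of_real h * p j)"

definition is_solution :: "real \<Rightarrow> (nat \<Rightarrow> complex) \<Rightarrow> (nat \<Rightarrow> complex) \<Rightarrow> bool" where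
  "is_solution h p x \<longleftrightarrow> (\<forall>n. delta_h h x n - p n * x n = 0)"

definition ulam_constant :: "real \<Rightarrow> (nat \<Rightarrow> complex) \<Rightarrow> real \<Rightarrow> bool" where
  "ulam_constant h p K \<longleftrightarrow> K > 0 \<and>
     (\<forall>\<epsilon>>0. \<forall>\<phi>. (\<forall>n. cmod (delta_h h \<phi> n - p n * \<phi> n) \<le> \<epsilon>) \<longrightarrow>
        (\<exists>x. is_solution h p x \<and> (\<forall>n. cmod (\<phi> n - x n) \<le> K * \<epsilon>)))"

definition min_ulam_constant :: "real \<Rightarrow> (nat \<Rightarrow> complex) \<Rightarrow> real \<Rightarrow> bool" where
  "min_ulam_constant h p K \<longleftrightarrow> ulam_constant h p K \<and>
     (\<forall>K'. 0 < K' \<and> K' < K \<longrightarrow> \<not> ulam_constant h p K')"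

end

theory Submission
  imports Defs
begin

text \<open>On the time scale the equation is the recurrence x (n+1) = c n x n with c n = 1 + h p n,
  so its solutions are the multiples of e_p, and an \<epsilon>-approximate solution \<phi> satisfies
  |\<phi> (n+1) - c n \<phi> n| \<le> h \<epsilon>. If S \<ge> 0 satisfies S (n+1) + 1 \<le> |c n| S n, then
  h \<epsilon> S n / |e_p n| is a telescoping majorant for the increments of \<phi> / e_p; hence \<phi> / e_p
  converges to some L and |\<phi> n - L e_p n| \<le> h \<epsilon> S n. For 2-periodic p with
  |c 0| |c 1| > 1 the 2-periodic S with values (1 + |c 1|) / (|c 0| |c 1| - 1) and
  (1 + |c 0|) / (|c 0| |c 1| - 1) solves this recurrence with equality. Then
  h S n sgn (e_p n) has residual of norm exactly 1, and since every nonzero solution grows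
  like (|c 0| |c 1|)^(n/2), the only solution within bounded distance of it is 0, which is at
  distance h S n; so h max S is the minimal Ulam constant. For |c 0| |c 1| < 1 the same S
  satisfies the reversed recurrence S (n+1) = |c n| S n + 1, which propagates a bound on the
  initial error forward.\<close>

lemma e_p_0 [simp]: "e_p h p 0 = 1"
  by (simp add: e_p_def)

lemma e_p_Suc: "e_p h p (Suc n) = e_p h p n * (1 + h * p n)"
  by (simp add: e_p_def)

lemma e_p_nonzero:
  fixes p :: "nat \<Rightarrow> complex"
  assumes "\<And>n. 1 + h * p n \<noteq> 0"
  shows "e_p h p n \<noteq> 0"
  using assms by (simp add: e_p_def)

lemma norm_residual:
  assumes "h > 0"
  shows "cmod (delta_h h x n - p n * x n) = cmod (x (Suc n) - (1 + h * p n) * x n) / h"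
proof -
  have "delta_h h x n - p n * x n = (x (Suc n) - (1 + h * p n) * x n) / h"
    using assms by (simp add: delta_h_def field_simps)
  then show ?thesis
    using assms by (simp add: norm_divide)
qed

lemma norm_recurrence_residual_le:
  assumes "h > 0" "cmod (delta_h h x n - p n * x n) \<le> \<epsilon>"
  shows "cmod (x (Suc n) - (1 + h * p n) * x n) \<le> h * \<epsilon>"
  using assms by (simp add: norm_residual pos_divide_le_eq mult.commute)

lemma is_solution_iff_recurrence:
  assumes "h \<noteq> 0"
  shows "is_solution h p x \<longleftrightarrow> (\<forall>n. x (Suc n) = (1 + h * p n) * x n)"
  using assms by (simp add: is_solution_def delta_h_def field_simps)

lemma is_solution_eq_e_p:
  assumes "h \<noteq> 0" "is_solution h p x"
  shows "x n = x 0 * e_p h p n"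
  using assms by (induction n) (simp_all add: is_solution_iff_recurrence e_p_Suc)

lemma is_solution_mult_e_p:
  assumes "h \<noteq> 0"
  shows "is_solution h p (\<lambda>n. L * e_p h p n)"
  using assms by (simp add: is_solution_iff_recurrence e_p_Suc)

lemma convergent_if_telescoping_majorant:
  fixes u :: "nat \<Rightarrow> 'a::banach" and R :: "nat \<Rightarrow> real"
  assumes R_nonneg: "\<And>n. 0 \<le> R n"
    and step: "\<And>n. norm (u (Suc n) - u n) \<le> R n - R (Suc n)"
  shows "\<exists>L. u \<longlonglongrightarrow> L \<and> (\<forall>n. norm (L - u n) \<le> R n)"
proof -
  have dist_le: "norm (u m - u n) \<le> R n - R m" if "n \<le> m" for m n
    using that
  proof (induction m rule: dec_induct)
    case base
    then show ?case by simp
  next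
    case (step m)
    then show ?case
      using norm_diff_triangle_le[OF assms(2)[of m] step.IH] by simp
  qed
  have "R (Suc n) \<le> R n" for n
    using step[of n] norm_ge_zero[of "u (Suc n) - u n"] by linarith
  then have "decseq R"
    by (simp add: decseq_Suc_iff)
  then obtain l where "R \<longlonglongrightarrow> l"
    using decseq_convergent R_nonneg by metis
  then have "Cauchy R"
    by (rule LIMSEQ_imp_Cauchy)
  have "Cauchy u"
  proof (rule CauchyI)
    fix e :: real
    assume "e > 0"
    with \<open>Cauchy R\<close> obtain M where M: "\<forall>m\<ge>M. \<forall>n\<ge>M. \<bar>R m - R n\<bar> < e"
      by (metis CauchyD real_norm_def)
    have "norm (u m - u n) < e" if "m \<ge> M" "n \<ge> M" for m n
    proof -
      have "norm (u m - u n) \<le> \<bar>R m - R n\<bar>"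
        using dist_le[of n m] dist_le[of m n] by (cases "n \<le> m") (auto simp: norm_minus_commute)
      with M that show ?thesis
        by force
    qed
    then show "\<exists>M. \<forall>m\<ge>M. \<forall>n\<ge>M. norm (u m - u n) < e"
      by blast
  qed
  then obtain L where L: "u \<longlonglongrightarrow> L"
    by (auto simp: Cauchy_convergent_iff convergent_def)
  have "norm (L - u n) \<le> R n" for n
  proof (rule LIMSEQ_le_const2)
    show "(\<lambda>m. norm (u m - u n)) \<longlonglongrightarrow> norm (L - u n)"
      by (intro tendsto_intros L)
    show "\<exists>N. \<forall>m\<ge>N. norm (u m - u n) \<le> R n"
    proof (intro exI allI impI)
      fix m
      assume "n \<le> m"
      with dist_le[of n m] R_nonneg[of m] show "norm (u m - u n) \<le> R n"
        by linarith
    qed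
  qed
  with L show ?thesis
    by blast
qed

lemma approximate_solution_limit:
  fixes \<phi> p :: "nat \<Rightarrow> complex" and S :: "nat \<Rightarrow> real"
  assumes h: "h > 0"
    and c_nonzero: "\<And>n. 1 + h * p n \<noteq> 0"
    and \<phi>: "\<And>n. cmod (delta_h h \<phi> n - p n * \<phi> n) \<le> \<epsilon>"
    and S_nonneg: "\<And>n. 0 \<le> S n"
    and S_super: "\<And>n. S (Suc n) + 1 \<le> cmod (1 + h * p n) * S n"
  shows "\<exists>L. (\<lambda>n. \<phi> n / e_p h p n) \<longlonglongrightarrow> L \<and> (\<forall>n. cmod (\<phi> n - L * e_p h p n) \<le> h * \<epsilon> * S n)"
proof -
  define E where "E = e_p h p"
  define c where "c n = 1 + h * p n" for n
  have E_pos: "cmod (E n) > 0" for n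
    using e_p_nonzero[OF c_nonzero] by (simp add: E_def)
  have c_pos: "cmod (c n) > 0" for n
    using c_nonzero by (simp add: c_def)
  have \<epsilon>: "0 \<le> \<epsilon>"
    using \<phi>[of 0] norm_ge_zero order_trans by blast
  define R where "R n = h * \<epsilon> * S n / cmod (E n)" for n
  have "norm (\<phi> (Suc n) / E (Suc n) - \<phi> n / E n) \<le> R n - R (Suc n)" for n
  proof -
    have E_Suc: "E (Suc n) = E n * c n"
      by (simp add: E_def c_def e_p_Suc)
    have "\<phi> (Suc n) / E (Suc n) - \<phi> n / E n = (\<phi> (Suc n) - c n * \<phi> n) / E (Suc n)"
      using E_pos[of n] c_pos[of n] by (simp add: E_Suc field_simps)
    then have "norm (\<phi> (Suc n) / E (Suc n) - \<phi> n / E n) \<le> h * \<epsilon> / cmod (E (Suc n))"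
      using norm_recurrence_residual_le[where x=\<phi> and p=p and n=n, OF h \<phi>[of n]] E_pos[of "Suc n"]
      by (simp add: norm_divide c_def divide_right_mono)
    also have "\<dots> \<le> h * \<epsilon> * (cmod (c n) * S n - S (Suc n)) / cmod (E (Suc n))"
      using mult_left_mono[of 1 "cmod (c n) * S n - S (Suc n)" "h * \<epsilon>"] S_super[of n] h \<epsilon>
      by (intro divide_right_mono) (simp_all add: c_def)
    also have "\<dots> = R n - R (Suc n)"
      using E_pos[of n] c_pos[of n] by (simp add: R_def E_Suc norm_mult field_simps)
    finally show ?thesis .
  qed
  moreover have "0 \<le> R n" for n
    using h \<epsilon> S_nonneg[of n] by (simp add: R_def)
  ultimately obtain L where L: "(\<lambda>n. \<phi> n / E n) \<longlonglongrightarrow> L" and bound: "\<And>n. cmod (L - \<phi> n / E n) \<le> R n"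
    using convergent_if_telescoping_majorant[of R "\<lambda>n. \<phi> n / E n"] by blast
  have "cmod (\<phi> n - L * E n) \<le> h * \<epsilon> * S n" for n
  proof -
    have "cmod (\<phi> n - L * E n) = cmod (L - \<phi> n / E n) * cmod (E n)"
      using E_pos[of n] by (simp add: norm_mult[symmetric] norm_minus_commute algebra_simps)
    also have "\<dots> \<le> R n * cmod (E n)"
      using bound[of n] by (simp add: mult_right_mono)
    finally show ?thesis
      using E_pos[of n] by (simp add: R_def)
  qed
  with L show ?thesis
    by (auto simp: E_def)
qed

lemma solutions_eq_if_near:
  fixes p x y \<phi> :: "nat \<Rightarrow> complex"
  assumes h: "h \<noteq> 0"
    and bounded_solutions: "\<And>z. is_solution h p z \<Longrightarrow> bounded (range z) \<Longrightarrow> z = (\<lambda>_. 0)"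
    and x: "is_solution h p x" "\<And>n. cmod (\<phi> n - x n) \<le> C"
    and y: "is_solution h p y" "\<And>n. cmod (\<phi> n - y n) \<le> C"
  shows "x = y"
proof -
  have "is_solution h p (\<lambda>n. x n - y n)"
    using x(1) y(1) h by (simp add: is_solution_iff_recurrence right_diff_distrib)
  moreover have "cmod (x n - y n) \<le> C + C" for n
    using norm_diff_triangle_le[of "x n" "\<phi> n" C "y n" C] x(2) y(2)
    by (simp add: norm_minus_commute)
  then have "bounded (range (\<lambda>n. x n - y n))"
    by (auto simp: bounded_iff)
  ultimately have "(\<lambda>n. x n - y n) = (\<lambda>_. 0)"
    by (rule bounded_solutions)
  then show ?thesis
    by (simp add: fun_eq_iff)
qed

lemma solution_error_propagation:
  fixes p x \<phi> :: "nat \<Rightarrow> complex" and T :: "nat \<Rightarrow> real"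
  assumes h: "h > 0"
    and c_nonzero: "\<And>n. 1 + h * p n \<noteq> 0"
    and x: "is_solution h p x"
    and \<phi>: "\<And>n. cmod (delta_h h \<phi> n - p n * \<phi> n) \<le> \<epsilon>"
    and T_sub: "\<And>n. cmod (1 + h * p n) * T n + 1 \<le> T (Suc n)"
    and init: "cmod (\<phi> 0 - x 0) < h * \<epsilon> * T 0"
  shows "cmod (\<phi> n - x n) < h * \<epsilon> * T n"
proof (induction n)
  case 0
  show ?case using init by simp
next
  case (Suc n)
  define c where "c = 1 + h * p n"
  have \<epsilon>: "0 \<le> \<epsilon>"
    using \<phi>[of 0] norm_ge_zero order_trans by blast
  have "\<phi> (Suc n) - x (Suc n) = (\<phi> (Suc n) - c * \<phi> n) + c * (\<phi> n - x n)"
    using x h by (simp add: is_solution_iff_recurrence c_def algebra_simps)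
  then have "cmod (\<phi> (Suc n) - x (Suc n)) \<le> cmod (\<phi> (Suc n) - c * \<phi> n) + cmod c * cmod (\<phi> n - x n)"
    by (metis norm_mult norm_triangle_ineq)
  also have "\<dots> < h * \<epsilon> + cmod c * (h * \<epsilon> * T n)"
    using norm_recurrence_residual_le[where x=\<phi> and p=p and n=n, OF h \<phi>[of n]]
      c_nonzero[of n] Suc.IH
    by (intro add_le_less_mono mult_strict_left_mono) (simp_all add: c_def)
  also have "\<dots> \<le> h * \<epsilon> * T (Suc n)"
    using mult_left_mono[OF T_sub[of n], of "h * \<epsilon>"] h \<epsilon> by (simp add: c_def algebra_simps)
  finally show ?case .
qed

lemma ulam_constant_if_supersolution:
  fixes p :: "nat \<Rightarrow> complex" and S :: "nat \<Rightarrow> real"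
  assumes h: "h > 0"
    and c_nonzero: "\<And>n. 1 + h * p n \<noteq> 0"
    and S_nonneg: "\<And>n. 0 \<le> S n"
    and S_super: "\<And>n. S (Suc n) + 1 \<le> cmod (1 + h * p n) * S n"
    and K: "0 < K" "\<And>n. h * S n \<le> K"
  shows "ulam_constant h p K"
  unfolding ulam_constant_def
proof (intro conjI allI impI)
  fix \<epsilon> :: real and \<phi> :: "nat \<Rightarrow> complex"
  assume \<epsilon>: "\<epsilon> > 0" and \<phi>: "\<forall>n. cmod (delta_h h \<phi> n - p n * \<phi> n) \<le> \<epsilon>"
  obtain L where L: "\<And>n. cmod (\<phi> n - L * e_p h p n) \<le> h * \<epsilon> * S n"
    using approximate_solution_limit[where h=h and p=p and \<phi>=\<phi> and \<epsilon>=\<epsilon> and S=S]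
      h c_nonzero \<phi> S_nonneg S_super by blast
  have "h * \<epsilon> * S n \<le> K * \<epsilon>" for n
    using mult_right_mono[OF K(2)[of n], of \<epsilon>] \<epsilon> by (simp add: algebra_simps)
  with L have "\<forall>n. cmod (\<phi> n - L * e_p h p n) \<le> K * \<epsilon>"
    using order_trans by blast
  moreover have "is_solution h p (\<lambda>n. L * e_p h p n)"
    using h by (simp add: is_solution_mult_e_p)
  ultimately show "\<exists>x. is_solution h p x \<and> (\<forall>n. cmod (\<phi> n - x n) \<le> K * \<epsilon>)"
    by blast
qed (use K in simp)

lemma residual_sgn_e_p:
  fixes p :: "nat \<Rightarrow> complex" and S :: "nat \<Rightarrow> real"
  assumes h: "h > 0"
    and c_nonzero: "\<And>n. 1 + h * p n \<noteq> 0"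
    and S_eq: "\<And>n. S (Suc n) + 1 = cmod (1 + h * p n) * S n"
  defines "\<phi> \<equiv> \<lambda>n. complex_of_real (h * S n) * sgn (e_p h p n)"
  shows "cmod (delta_h h \<phi> n - p n * \<phi> n) = 1"
proof -
  define c where "c = 1 + h * p n"
  have c_polar: "c = complex_of_real (cmod c) * sgn c"
    by (simp add: sgn_eq)
  have S_step: "S (Suc n) - cmod c * S n = -1"
    using S_eq[of n] by (simp add: c_def)
  have "\<phi> (Suc n) = complex_of_real (h * S (Suc n)) * (sgn (e_p h p n) * sgn c)"
    by (simp add: \<phi>_def e_p_Suc sgn_mult c_def)
  moreover have "c * \<phi> n = complex_of_real (h * (cmod c * S n)) * (sgn (e_p h p n) * sgn c)"
    by (subst c_polar) (simp add: \<phi>_def mult_ac)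
  ultimately have "\<phi> (Suc n) - c * \<phi> n
      = complex_of_real (h * (S (Suc n) - cmod c * S n)) * (sgn (e_p h p n) * sgn c)"
    by (simp add: right_diff_distrib left_diff_distrib)
  then have "\<phi> (Suc n) - c * \<phi> n = - complex_of_real h * (sgn (e_p h p n) * sgn c)"
    unfolding S_step by simp
  then have "cmod (\<phi> (Suc n) - c * \<phi> n) = h"
    using h e_p_nonzero[of h p n, OF c_nonzero] c_nonzero[of n]
    by (simp add: norm_mult norm_sgn c_def)
  then show ?thesis
    using h by (simp add: norm_residual c_def)
qed

lemma ulam_constant_lower_bound:
  fixes p :: "nat \<Rightarrow> complex" and S :: "nat \<Rightarrow> real"
  assumes h: "h > 0"
    and c_nonzero: "\<And>n. 1 + h * p n \<noteq> 0"
    and S_nonneg: "\<And>n. 0 \<le> S n"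
    and S_bounded: "\<And>n. S n \<le> M"
    and S_eq: "\<And>n. S (Suc n) + 1 = cmod (1 + h * p n) * S n"
    and bounded_solutions: "\<And>z. is_solution h p z \<Longrightarrow> bounded (range z) \<Longrightarrow> z = (\<lambda>_. 0)"
    and K: "ulam_constant h p K"
  shows "h * S n \<le> K"
proof -
  define \<phi> where "\<phi> = (\<lambda>n. complex_of_real (h * S n) * sgn (e_p h p n))"
  have norm_\<phi>: "cmod (\<phi> n) = h * S n" for n
    using h S_nonneg[of n] e_p_nonzero[of h p n, OF c_nonzero]
    by (simp add: \<phi>_def norm_mult norm_sgn)
  have "\<forall>n. cmod (delta_h h \<phi> n - p n * \<phi> n) \<le> 1"
    using residual_sgn_e_p[of h p S, OF h c_nonzero S_eq] by (simp add: \<phi>_def)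
  moreover have "\<forall>\<epsilon>>0. \<forall>\<phi>. (\<forall>n. cmod (delta_h h \<phi> n - p n * \<phi> n) \<le> \<epsilon>) \<longrightarrow>
      (\<exists>x. is_solution h p x \<and> (\<forall>n. cmod (\<phi> n - x n) \<le> K * \<epsilon>))"
    using K unfolding ulam_constant_def by blast
  ultimately obtain x where x: "is_solution h p x" "\<And>n. cmod (\<phi> n - x n) \<le> K"
    by (metis mult_1_right zero_less_one)
  have "cmod (x n) \<le> h * M + K" for n
  proof -
    have "cmod (x n) \<le> cmod (\<phi> n) + cmod (\<phi> n - x n)"
      by (metis norm_minus_commute norm_triangle_sub)
    moreover have "cmod (\<phi> n) \<le> h * M"
      using norm_\<phi>[of n] mult_left_mono[OF S_bounded[of n], of h] h by simp
    ultimately show ?thesis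
      using x(2)[of n] by linarith
  qed
  then have "bounded (range x)"
    by (auto simp: bounded_iff)
  with x(1) have "x = (\<lambda>_. 0)"
    by (rule bounded_solutions)
  with x(2)[of n] norm_\<phi>[of n] show ?thesis
    by simp
qed

definition two_periodic_bound :: "real \<Rightarrow> real \<Rightarrow> nat \<Rightarrow> real" where
  "two_periodic_bound a b n = (if even n then 1 + b else 1 + a) / \<bar>a * b - 1\<bar>"

lemma two_periodic_bound_expanding:
  assumes "1 < a * b"
  shows "two_periodic_bound a b (Suc n) + 1 = (if even n then a else b) * two_periodic_bound a b n"
  using assms by (simp add: two_periodic_bound_def field_simps)

lemma two_periodic_bound_contracting:
  assumes "a * b < 1"
  shows "two_periodic_bound a b (Suc n) = (if even n then a else b) * two_periodic_bound a b n + 1"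
  using assms by (simp add: two_periodic_bound_def field_simps)

lemma two_periodic_bound_pos:
  assumes "0 \<le> a" "0 \<le> b" "a * b \<noteq> 1"
  shows "0 < two_periodic_bound a b n"
  using assms by (simp add: two_periodic_bound_def)

lemma two_periodic_bound_le_max:
  "two_periodic_bound a b n \<le> max (two_periodic_bound a b 0) (two_periodic_bound a b 1)"
  by (simp add: two_periodic_bound_def)

lemma norm_one_plus_pfun:
  "cmod (1 + h * pfun p0 p1 n) = (if even n then cmod (1 + h * p0) else cmod (1 + h * p1))"
  by (simp add: pfun_def)

lemma one_plus_pfun_nonzero:
  assumes "0 < cmod (1 + h * p0) * cmod (1 + h * p1)"
  shows "1 + h * pfun p0 p1 n \<noteq> 0"
  using assms by (auto simp: pfun_def)

lemma norm_e_p_pfun_double: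
  "cmod (e_p h (pfun p0 p1) (2 * m)) = (cmod (1 + h * p0) * cmod (1 + h * p1)) ^ m"
  by (induction m) (simp_all add: e_p_Suc pfun_def norm_mult)

lemma bounded_solution_pfun_eq_0:
  fixes p0 p1 :: complex and x :: "nat \<Rightarrow> complex"
  assumes h: "h \<noteq> 0" and growth: "1 < cmod (1 + h * p0) * cmod (1 + h * p1)"
    and x: "is_solution h (pfun p0 p1) x" and bounded: "bounded (range x)"
  shows "x = (\<lambda>_. 0)"
proof -
  obtain B where B: "\<And>n. cmod (x n) \<le> B"
    using bounded by (auto simp: bounded_iff)
  have "x 0 = 0"
  proof (rule ccontr)
    assume "x 0 \<noteq> 0"
    obtain m where m: "B / cmod (x 0) < (cmod (1 + h * p0) * cmod (1 + h * p1)) ^ m"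
      using real_arch_pow[OF growth] by blast
    have "cmod (x (2 * m)) = cmod (x 0) * (cmod (1 + h * p0) * cmod (1 + h * p1)) ^ m"
      using is_solution_eq_e_p[OF h x, of "2 * m"] by (simp add: norm_mult norm_e_p_pfun_double)
    with m B[of "2 * m"] \<open>x 0 \<noteq> 0\<close> show False
      by (simp add: divide_less_eq mult.commute)
  qed
  then have "x n = 0" for n
    using is_solution_eq_e_p[OF h x, of n] by simp
  then show ?thesis
    by (simp add: fun_eq_iff)
qed

lemma pfun_approximation_expanding:
  fixes h :: real and p0 p1 :: complex and \<phi> :: "nat \<Rightarrow> complex"
  defines "a \<equiv> cmod (1 + h * p0)" and "b \<equiv> cmod (1 + h * p1)"
  defines "K \<equiv> h * max (two_periodic_bound a b 0) (two_periodic_bound a b 1)"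
  assumes h: "h > 0" and growth: "1 < a * b"
    and \<phi>: "\<And>n. cmod (delta_h h \<phi> n - pfun p0 p1 n * \<phi> n) \<le> \<epsilon>"
  shows "\<exists>L. (\<lambda>n. \<phi> n / e_p h (pfun p0 p1) n) \<longlonglongrightarrow> L \<and>
           (\<forall>n. cmod (\<phi> n - L * e_p h (pfun p0 p1) n) \<le> K * \<epsilon>) \<and>
           (\<forall>y. is_solution h (pfun p0 p1) y \<and> (\<forall>n. cmod (\<phi> n - y n) \<le> K * \<epsilon>)
              \<longrightarrow> y = (\<lambda>n. L * e_p h (pfun p0 p1) n))"
proof -
  define S where "S = two_periodic_bound a b"
  have c_nonzero: "1 + h * pfun p0 p1 n \<noteq> 0" for n
    using growth by (intro one_plus_pfun_nonzero) (simp add: a_def b_def)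
  have S_super: "S (Suc n) + 1 \<le> cmod (1 + h * pfun p0 p1 n) * S n" for n
    using two_periodic_bound_expanding[OF growth, of n]
    by (simp add: S_def a_def b_def norm_one_plus_pfun)
  have S_nonneg: "0 \<le> S n" for n
    using two_periodic_bound_pos[of a b n] growth by (simp add: S_def a_def b_def)
  obtain L where L: "(\<lambda>n. \<phi> n / e_p h (pfun p0 p1) n) \<longlonglongrightarrow> L"
    and L_near: "\<And>n. cmod (\<phi> n - L * e_p h (pfun p0 p1) n) \<le> h * \<epsilon> * S n"
    using approximate_solution_limit[where p="pfun p0 p1" and S=S,
        OF h c_nonzero \<phi> S_nonneg S_super]
    by blast
  have \<epsilon>: "0 \<le> \<epsilon>"
    using \<phi>[of 0] norm_ge_zero order_trans by blast
  have K_near: "cmod (\<phi> n - L * e_p h (pfun p0 p1) n) \<le> K * \<epsilon>" for n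
    using L_near[of n] mult_left_mono[OF two_periodic_bound_le_max[of a b n], of "h * \<epsilon>"] h \<epsilon>
    by (simp add: K_def S_def mult_ac)
  have bounded_solutions: "z = (\<lambda>_. 0)"
    if "is_solution h (pfun p0 p1) z" "bounded (range z)" for z
    using bounded_solution_pfun_eq_0[of h p0 p1 z] that h growth by (simp add: a_def b_def)
  have "y = (\<lambda>n. L * e_p h (pfun p0 p1) n)"
    if "is_solution h (pfun p0 p1) y" "\<forall>n. cmod (\<phi> n - y n) \<le> K * \<epsilon>" for y
    using solutions_eq_if_near[OF _ bounded_solutions that(1) _ is_solution_mult_e_p K_near]
      that(2) h
    by simp
  with L K_near show ?thesis
    by blast
qed

lemma min_ulam_constant_pfun:
  fixes h :: real and p0 p1 :: complex
  defines "a \<equiv> cmod (1 + h * p0)" and "b \<equiv> cmod (1 + h * p1)"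
  defines "K \<equiv> h * max (two_periodic_bound a b 0) (two_periodic_bound a b 1)"
  assumes h: "h > 0" and growth: "1 < a * b"
  shows "min_ulam_constant h (pfun p0 p1) K"
proof -
  define S where "S = two_periodic_bound a b"
  have c_nonzero: "1 + h * pfun p0 p1 n \<noteq> 0" for n
    using growth by (intro one_plus_pfun_nonzero) (simp add: a_def b_def)
  have S_eq: "S (Suc n) + 1 = cmod (1 + h * pfun p0 p1 n) * S n" for n
    using two_periodic_bound_expanding[OF growth, of n]
    by (simp add: S_def a_def b_def norm_one_plus_pfun)
  have S_pos: "0 < S n" for n
    using two_periodic_bound_pos[of a b n] growth by (simp add: S_def a_def b_def)
  have S_le_max: "S n \<le> max (S 0) (S 1)" for n
    unfolding S_def by (rule two_periodic_bound_le_max)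
  have "ulam_constant h (pfun p0 p1) K"
  proof (rule ulam_constant_if_supersolution[where S=S,
        OF h c_nonzero less_imp_le[OF S_pos] eq_refl[OF S_eq]])
    show "0 < K"
      using h S_pos[of 0] by (simp add: K_def S_def)
    show "h * S n \<le> K" for n
      using mult_left_mono[OF S_le_max[of n]] h by (simp add: K_def S_def)
  qed
  moreover have "K \<le> K'" if "ulam_constant h (pfun p0 p1) K'" for K'
  proof -
    have bounded_solutions: "z = (\<lambda>_. 0)"
      if "is_solution h (pfun p0 p1) z" "bounded (range z)" for z
      using bounded_solution_pfun_eq_0[of h p0 p1 z] that h growth by (simp add: a_def b_def)
    show ?thesis
      using ulam_constant_lower_bound[where S=S, OF h c_nonzero less_imp_le[OF S_pos] S_le_max S_eq
          bounded_solutions that] h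
      by (simp add: K_def S_def max_mult_distrib_left)
  qed
  ultimately show ?thesis
    unfolding min_ulam_constant_def by (meson leD)
qed

lemma pfun_error_contracting:
  fixes h :: real and p0 p1 :: complex and \<phi> x :: "nat \<Rightarrow> complex"
  defines "a \<equiv> cmod (1 + h * p0)" and "b \<equiv> cmod (1 + h * p1)"
  assumes h: "h > 0" and prod_pos: "0 < a * b" and contraction: "a * b < 1"
    and \<phi>: "\<And>n. cmod (delta_h h \<phi> n - pfun p0 p1 n * \<phi> n) \<le> \<epsilon>"
    and x: "is_solution h (pfun p0 p1) x"
    and init: "cmod (\<phi> 0 - x 0) < h * \<epsilon> * two_periodic_bound a b 0"
  shows "cmod (\<phi> n - x n) < h * \<epsilon> * max (two_periodic_bound a b 0) (two_periodic_bound a b 1)"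
proof -
  have c_nonzero: "1 + h * pfun p0 p1 n \<noteq> 0" for n
    using prod_pos by (intro one_plus_pfun_nonzero) (simp add: a_def b_def)
  have T_sub: "cmod (1 + h * pfun p0 p1 n) * two_periodic_bound a b n + 1
      \<le> two_periodic_bound a b (Suc n)" for n
    using two_periodic_bound_contracting[OF contraction, of n]
    by (simp add: a_def b_def norm_one_plus_pfun)
  have \<epsilon>: "0 \<le> \<epsilon>"
    using \<phi>[of 0] norm_ge_zero order_trans by blast
  have "cmod (\<phi> n - x n) < h * \<epsilon> * two_periodic_bound a b n"
    by (rule solution_error_propagation[OF h c_nonzero x \<phi> T_sub init])
  also have "\<dots> \<le> h * \<epsilon> * max (two_periodic_bound a b 0) (two_periodic_bound a b 1)"
    using h \<epsilon> by (intro mult_left_mono two_periodic_bound_le_max) simp_all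
  finally show ?thesis .
qed

theorem theorem2p2:
  fixes h \<epsilon> :: real and p0 p1 :: complex and \<phi> :: "nat \<Rightarrow> complex"
  assumes hpos: "h > 0"
    and p0: "p0 \<noteq> - 1 / complex_of_real h" and p1: "p1 \<noteq> - 1 / complex_of_real h"
    and p01: "p0 \<noteq> p1"
    and prod_pos: "0 < cmod (1 + h * p0) * cmod (1 + h * p1)"
    and prod_ne1: "cmod (1 + h * p0) * cmod (1 + h * p1) \<noteq> 1"
    and eps: "\<epsilon> > 0"
    and phi: "\<forall>n. cmod (delta_h h \<phi> n - pfun p0 p1 n * \<phi> n) \<le> \<epsilon>"
  shows
    "(cmod (1 + h * p0) * cmod (1 + h * p1) > 1 \<longrightarrow>
       (let K1 = h * max ((1 + cmod (1 + h * p0)) / (-1 + cmod (1 + h * p0) * cmod (1 + h * p1)))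
                         ((1 + cmod (1 + h * p1)) / (-1 + cmod (1 + h * p0) * cmod (1 + h * p1)))
        in (\<exists>L. (\<lambda>n. \<phi> n / e_p h (pfun p0 p1) n) \<longlonglongrightarrow> L \<and>
              is_solution h (pfun p0 p1) (\<lambda>n. L * e_p h (pfun p0 p1) n) \<and>
              (\<forall>n. cmod (\<phi> n - L * e_p h (pfun p0 p1) n) \<le> K1 * \<epsilon>) \<and>
              (\<forall>y. is_solution h (pfun p0 p1) y \<and> (\<forall>n. cmod (\<phi> n - y n) \<le> K1 * \<epsilon>)
                     \<longrightarrow> y = (\<lambda>n. L * e_p h (pfun p0 p1) n))) \<and>
           min_ulam_constant h (pfun p0 p1) K1))
   \<and>
    (cmod (1 + h * p0) * cmod (1 + h * p1) < 1 \<longrightarrow>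
       (\<forall>x. is_solution h (pfun p0 p1) x \<and>
            cmod (\<phi> 0 - x 0) < \<epsilon> * h * ((1 + cmod (1 + h * p1)) / (1 - cmod (1 + h * p0) * cmod (1 + h * p1)))
         \<longrightarrow> (\<forall>n. cmod (\<phi> n - x n) < \<epsilon> * h *
                 max ((1 + cmod (1 + h * p0)) / (1 - cmod (1 + h * p0) * cmod (1 + h * p1)))
                     ((1 + cmod (1 + h * p1)) / (1 - cmod (1 + h * p0) * cmod (1 + h * p1))))))"
proof -
  have phi_le: "\<And>n. cmod (delta_h h \<phi> n - pfun p0 p1 n * \<phi> n) \<le> \<epsilon>"
    using phi by blast
  have K_expanding: "h * max ((1 + a) / (-1 + a * b)) ((1 + b) / (-1 + a * b))
      = h * max (two_periodic_bound a b 0) (two_periodic_bound a b 1)"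
    if "1 < a * b" for a b :: real
    using that by (simp add: two_periodic_bound_def max.commute)
  have K_contracting: "(1 + a) / (1 - a * b) = two_periodic_bound a b 1"
      "(1 + b) / (1 - a * b) = two_periodic_bound a b 0" if "a * b < 1" for a b :: real
    using that by (simp_all add: two_periodic_bound_def)
  show ?thesis
    unfolding Let_def
    apply (intro conjI impI)
    subgoal premises growth
      using pfun_approximation_expanding[OF hpos growth phi_le] is_solution_mult_e_p hpos
      unfolding K_expanding[OF growth] by auto
    subgoal premises growth
      using min_ulam_constant_pfun[OF hpos growth] unfolding K_expanding[OF growth] .
    subgoal premises contraction
      using pfun_error_contracting[OF hpos prod_pos contraction phi_le]
      unfolding K_contracting[OF contraction] by (simp add: mult.commute max.commute)
    done
qed

end
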